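(* Let $\delta,\varepsilon\in[0,1)$, let $\mathscr{A}$ be a $C^*$-algebra and let $\mathscr{E},\mathscr{F}$ be Hilbert $\mathscr{A}$-modules. (i) If $S:\mathscr{E}\to\mathscr{E}$ is a linear $(\delta,\delta)$-orthogonality preserving mapping and $T:\mathscr{E}\to\mathscr{F}$ is a linear $(\delta,\varepsilon)$-orthogonality preserving mapping, then $TS$ is a linear $(\delta,\varepsilon)$-orthogonality preserving mapping. (ii) Suppose $\mathbb{K}(\mathscr{H})\subseteq\mathscr{A}\subseteq\mathbb{B}(\mathscr{H})$ for some complex Hilbert space $\mathscr{H}$. If $S:\mathscr{F}\to\mathscr{F}$ is a nonzero $\mathscr{A}$-linear $(\varepsilon,\varepsilon)$-orthogonality preserving mapping and $T:\mathscr{E}\to\mathscr{F}$ is an $\mathscr{A}$-linear $(\delta,\varepsilon)$-orthogonality preserving mapping, then $ST$ is an $\mathscr{A}$-linear $(\delta,\varepsilon)$-orthogonality preserving mapping.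
   Context: A Hilbert $\mathscr{A}$-module is a right $\mathscr{A}$-module with an $\mathscr{A}$-valued inner product $\langle\cdot,\cdot\rangle$ ($\mathbb{C}$-linear and $\mathscr{A}$-linear in the second variable, $\langle x,y\rangle^*=\langle y,x\rangle$, $\langle x,x\rangle\geq0$ with equality iff $x=0$), complete in the norm $\|x\|=\|\langle x,x\rangle\|^{1/2}$. A map is $\mathscr{A}$-linear if it is linear and $T(xa)=(Tx)a$. A mapping $T$ is $(\delta,\varepsilon)$-orthogonality preserving if for all $x,y$, $\|\langle x,y\rangle\|\leq\delta\|x\|\,\|y\|$ implies $\|\langle Tx,Ty\rangle\|\leq\varepsilon\|Tx\|\,\|Ty\|$. $\mathbb{K}(\mathscr{H})$, $\mathbb{B}(\mathscr{H})$ denote the compact and bounded operators on $\mathscr{H}$. *)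

theory Defs
  imports "HOL-Analysis.Analysis"
begin

class complex_vector = real_vector +
  fixes scaleC :: "complex \<Rightarrow> 'a \<Rightarrow> 'a" (infixr \<open>*\<^sub>C\<close> 75)
  assumes scaleC_add_right: "a *\<^sub>C (x + y) = a *\<^sub>C x + a *\<^sub>C y"
    and scaleC_add_left: "(a + b) *\<^sub>C x = a *\<^sub>C x + b *\<^sub>C x"
    and scaleC_scaleC: "a *\<^sub>C (b *\<^sub>C x) = (a * b) *\<^sub>C x"
    and scaleC_one: "1 *\<^sub>C x = x"
    and scaleR_scaleC: "scaleR r x = complex_of_real r *\<^sub>C x"

class complex_normed_vector = complex_vector + real_normed_vector +
  assumes norm_scaleC: "norm (a *\<^sub>C x) = cmod a * norm x"

class complex_normed_algebra = complex_normed_vector + real_normed_algebra +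
  assumes mult_scaleC_left: "(a *\<^sub>C x) * y = a *\<^sub>C (x * y)"
    and mult_scaleC_right: "x * (a *\<^sub>C y) = a *\<^sub>C (x * y)"

class cstar_algebra = complex_normed_algebra + banach +
  fixes adj :: "'a \<Rightarrow> 'a"
  assumes adj_add: "adj (x + y) = adj x + adj y"
    and adj_scaleC: "adj (c *\<^sub>C x) = cnj c *\<^sub>C adj x"
    and adj_mult: "adj (x * y) = adj y * adj x"
    and adj_adj: "adj (adj x) = x"
    and cstar_identity: "norm (adj x * x) = norm x * norm x"

text \<open>Complex inner product spaces (conjugate-linear in the first variable) and
  complex Hilbert spaces.\<close>
class complex_inner = complex_normed_vector +
  fixes cinner :: "'a \<Rightarrow> 'a \<Rightarrow> complex"
  assumes cinner_commute: "cinner x y = cnj (cinner y x)"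
    and cinner_add_right: "cinner x (y + z) = cinner x y + cinner x z"
    and cinner_scaleC_right: "cinner x (c *\<^sub>C y) = c * cinner x y"
    and cinner_self_real: "Im (cinner x x) = 0"
    and norm_eq_sqrt_cinner: "norm x = sqrt (Re (cinner x x))"

class chilbert_space = complex_inner + complete_space

definition positive :: "'a::cstar_algebra \<Rightarrow> bool" where
  "positive a \<longleftrightarrow> (\<exists>b. a = adj b * b)"

definition hnorm :: "('e \<Rightarrow> 'e \<Rightarrow> 'a::cstar_algebra) \<Rightarrow> 'e \<Rightarrow> real" where
  "hnorm ip x = sqrt (norm (ip x x))"

text \<open>(act, ip) makes the complex vector space 'e a Hilbert 'a-module:
  act is the right module action, ip the 'a-valued inner product.\<close>
definition hilbert_module ::
  "('e::complex_vector \<Rightarrow> 'a::cstar_algebra \<Rightarrow> 'e) \<Rightarrow> ('e \<Rightarrow> 'e \<Rightarrow> 'a) \<Rightarrow> bool" where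
  "hilbert_module act ip \<longleftrightarrow>
     (\<forall>x y a. act (x + y) a = act x a + act y a) \<and>
     (\<forall>x a b. act x (a + b) = act x a + act x b) \<and>
     (\<forall>x a b. act x (a * b) = act (act x a) b) \<and>
     (\<forall>x a c. act (c *\<^sub>C x) a = c *\<^sub>C act x a) \<and>
     (\<forall>x a c. act x (c *\<^sub>C a) = c *\<^sub>C act x a) \<and>
     (\<forall>x y z. ip x (y + z) = ip x y + ip x z) \<and>
     (\<forall>x y c. ip x (c *\<^sub>C y) = c *\<^sub>C ip x y) \<and>
     (\<forall>x y a. ip x (act y a) = ip x y * a) \<and>
     (\<forall>x y. adj (ip x y) = ip y x) \<and>
     (\<forall>x. positive (ip x x)) \<and>
     (\<forall>x. ip x x = 0 \<longleftrightarrow> x = 0) \<and>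
     (\<forall>X::nat \<Rightarrow> 'e.
        (\<forall>e>0. \<exists>N. \<forall>m\<ge>N. \<forall>n\<ge>N. hnorm ip (X m - X n) < e) \<longrightarrow>
        (\<exists>L. (\<lambda>n. hnorm ip (X n - L)) \<longlonglongrightarrow> 0))"

definition clinear :: "('e::complex_vector \<Rightarrow> 'f::complex_vector) \<Rightarrow> bool" where
  "clinear T \<longleftrightarrow> (\<forall>x y. T (x + y) = T x + T y) \<and> (\<forall>c x. T (c *\<^sub>C x) = c *\<^sub>C T x)"

definition module_linear ::
  "('e::complex_vector \<Rightarrow> 'a \<Rightarrow> 'e) \<Rightarrow> ('f::complex_vector \<Rightarrow> 'a \<Rightarrow> 'f) \<Rightarrow> ('e \<Rightarrow> 'f) \<Rightarrow> bool" where
  "module_linear actE actF T \<longleftrightarrow> clinear T \<and> (\<forall>x a. T (actE x a) = actF (T x) a)"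

definition orth_preserving ::
  "('e \<Rightarrow> 'e \<Rightarrow> 'a::cstar_algebra) \<Rightarrow> ('f \<Rightarrow> 'f \<Rightarrow> 'a) \<Rightarrow> real \<Rightarrow> real \<Rightarrow> ('e \<Rightarrow> 'f) \<Rightarrow> bool" where
  "orth_preserving ipE ipF \<delta> \<epsilon> T \<longleftrightarrow>
     (\<forall>x y. norm (ipE x y) \<le> \<delta> * hnorm ipE x * hnorm ipE y \<longrightarrow>
            norm (ipF (T x) (T y)) \<le> \<epsilon> * hnorm ipF (T x) * hnorm ipF (T y))"

definition bounded_clinear :: "('a::complex_normed_vector \<Rightarrow> 'b::complex_normed_vector) \<Rightarrow> bool" where
  "bounded_clinear T \<longleftrightarrow> clinear T \<and> (\<exists>K. \<forall>x. norm (T x) \<le> K * norm x)"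

definition compact_operator :: "('h::chilbert_space \<Rightarrow> 'h) \<Rightarrow> bool" where
  "compact_operator K \<longleftrightarrow> clinear K \<and> compact (closure (K ` ball 0 1))"

text \<open>pi identifies the C*-algebra 'a with a C*-subalgebra of B(H) (H = 'h):
  an injective isometric *-homomorphism into the bounded operators on H.
  Its range contains all compact operators: K(H) \<subseteq> A \<subseteq> B(H).\<close>
definition between_compact_and_bounded :: "('a::cstar_algebra \<Rightarrow> ('h::chilbert_space \<Rightarrow> 'h)) \<Rightarrow> bool" where
  "between_compact_and_bounded \<pi> \<longleftrightarrow>
     (\<forall>a. bounded_clinear (\<pi> a)) \<and> inj \<pi> \<and>
     (\<forall>a b. \<pi> (a + b) = (\<lambda>x. \<pi> a x + \<pi> b x)) \<and>
     (\<forall>c a. \<pi> (c *\<^sub>C a) = (\<lambda>x. c *\<^sub>C \<pi> a x)) \<and>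
     (\<forall>a b. \<pi> (a * b) = \<pi> a \<circ> \<pi> b) \<and>
     (\<forall>a x y. cinner (\<pi> (adj a) x) y = cinner x (\<pi> a y)) \<and>
     (\<forall>a. onorm (\<pi> a) = norm a) \<and>
     (\<forall>K. compact_operator K \<longrightarrow> K \<in> range \<pi>)"

end

theory Submission
  imports Defs
begin

text \<open>Approximate orthogonality preservation composes: a \<open>(\<delta>,\<epsilon>)\<close>-preserving map
  followed by an \<open>(\<epsilon>,\<eta>)\<close>-preserving map is \<open>(\<delta>,\<eta>)\<close>-preserving, and linearity over
  \<open>\<complex>\<close> or over the algebra is stable under composition. Both parts of the corollary
  are instances of this.\<close>

lemma clinear_comp:
  assumes "clinear S" and "clinear T"
  shows "clinear (S \<circ> T)"
  using assms by (simp add: clinear_def)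

lemma module_linear_comp:
  assumes "module_linear actF actG S" and "module_linear actE actF T"
  shows "module_linear actE actG (S \<circ> T)"
  using assms by (simp add: module_linear_def clinear_comp)

lemma orth_preserving_comp:
  assumes "orth_preserving ipF ipG \<epsilon> \<eta> S" and "orth_preserving ipE ipF \<delta> \<epsilon> T"
  shows "orth_preserving ipE ipG \<delta> \<eta> (S \<circ> T)"
  using assms unfolding orth_preserving_def by simp

theorem corollary3p16:
  fixes \<delta> \<epsilon> :: real
    and actE :: "'e::complex_vector \<Rightarrow> 'a::cstar_algebra \<Rightarrow> 'e"
    and ipE :: "'e \<Rightarrow> 'e \<Rightarrow> 'a"
    and actF :: "'f::complex_vector \<Rightarrow> 'a \<Rightarrow> 'f"
    and ipF :: "'f \<Rightarrow> 'f \<Rightarrow> 'a"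
  assumes "0 \<le> \<delta>" "\<delta> < 1" "0 \<le> \<epsilon>" "\<epsilon> < 1"
    and "hilbert_module actE ipE" and "hilbert_module actF ipF"
  shows
    "(\<forall>(S :: 'e \<Rightarrow> 'e) (T :: 'e \<Rightarrow> 'f).
        clinear S \<and> orth_preserving ipE ipE \<delta> \<delta> S \<and>
        clinear T \<and> orth_preserving ipE ipF \<delta> \<epsilon> T \<longrightarrow>
        clinear (T \<circ> S) \<and> orth_preserving ipE ipF \<delta> \<epsilon> (T \<circ> S))
     \<and>
     (\<forall>(\<pi> :: 'a \<Rightarrow> ('h::chilbert_space \<Rightarrow> 'h)) (S :: 'f \<Rightarrow> 'f) (T :: 'e \<Rightarrow> 'f).
        between_compact_and_bounded \<pi> \<and>
        S \<noteq> (\<lambda>_. 0) \<and> module_linear actF actF S \<and> orth_preserving ipF ipF \<epsilon> \<epsilon> S \<and>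
        module_linear actE actF T \<and> orth_preserving ipE ipF \<delta> \<epsilon> T \<longrightarrow>
        module_linear actE actF (S \<circ> T) \<and> orth_preserving ipE ipF \<delta> \<epsilon> (S \<circ> T))"
  by (blast intro: clinear_comp module_linear_comp orth_preserving_comp)

end
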